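(* Let $X$ be a set, $\mathcal{F}\subseteq\mathcal{P}(X)$ a field, $\mathcal{E}\subseteq\mathcal{F}$ an arbitrary subset, and $(\mu^+,\mu^-)$ a conjugate pair of set functions on $\mathcal{F}$ such that $\mu^+(A)=\mu^-(A)$ for all $A\in\mathcal{E}$. Then the pseudometric space $(\mathcal{E}, d_{\mu^+})$ is complete if and only if the following condition holds: for every sequence $(A_i)_{i\in\mathbb{N}}$ in $\mathcal{E}$ such that the nets $\{\mu^+(\bigcup_{k=i}^j A_k): i,j\in\mathbb{N}, i\le j\}$ and $\{\mu^-(\bigcup_{k=i}^j A_k): i,j\in\mathbb{N}, i\le j\}$ converge to a common limit $L$, the net $\{\bigcup_{k=i}^j A_k: i,j\in\mathbb{N}, i\le j\}$ converges in $d_{\mu^+}$ to some $A\in\mathcal{E}$ with $\mu^+(A)=L$.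
   Context: A field is a family of subsets of $X$ containing $\emptyset$ and closed under complements and finite unions. $I_A$ denotes the indicator function of $A$. Consider $\mu^+,\mu^-:\mathcal{F}\to[0,1]$ with $\mu^\pm(\emptyset)=0$ and $\mu^\pm(X)=1$. $\mu^+$ is subadditive if $I_A\le I_B+I_C\implies \mu^+(A)\le\mu^+(B)+\mu^+(C)$; $\mu^-$ is superadditive if $I_A\ge I_B+I_C\implies\mu^-(A)\ge\mu^-(B)+\mu^-(C)$; $\mu^-$ is co-subadditive with respect to $\mu^+$ if $I_A\le I_B+I_C\implies\mu^-(A)\le\mu^-(B)+\mu^+(C)$; $\mu^+$ is co-superadditive with respect to $\mu^-$ if $I_A\ge I_B+I_C\implies\mu^+(A)\ge\mu^+(B)+\mu^-(C)$ (all for $A,B,C\in\mathcal{F}$). The pair $(\mu^+,\mu^-)$ is conjugate if all four properties hold. For subadditive $\mu^+$, $d_{\mu^+}(A,B):=\mu^+(A\triangle B)$ is a pseudometric on $\mathcal{F}$ (restricted to $\mathcal{E}$ here). The index set $\{(i,j): i\le j\}$ is directed by the product order $(i,j)\le(k,l)\iff i\le k$ and $j\le l$. *)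

theory Defs
  imports "HOL-Library.Indicator_Function"
begin

definition field_of_sets :: "'a set \<Rightarrow> 'a set set \<Rightarrow> bool" where
  "field_of_sets X F \<longleftrightarrow> F \<subseteq> Pow X \<and> {} \<in> F \<and>
     (\<forall>A\<in>F. X - A \<in> F) \<and> (\<forall>A\<in>F. \<forall>B\<in>F. A \<union> B \<in> F)"

definition subadditive :: "'a set \<Rightarrow> 'a set set \<Rightarrow> ('a set \<Rightarrow> real) \<Rightarrow> bool" where
  "subadditive X F mp \<longleftrightarrow> (\<forall>A\<in>F. \<forall>B\<in>F. \<forall>C\<in>F.
     (\<forall>x\<in>X. (indicator A x :: real) \<le> indicator B x + indicator C x) \<longrightarrow> mp A \<le> mp B + mp C)"

definition superadditive :: "'a set \<Rightarrow> 'a set set \<Rightarrow> ('a set \<Rightarrow> real) \<Rightarrow> bool" where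
  "superadditive X F mm \<longleftrightarrow> (\<forall>A\<in>F. \<forall>B\<in>F. \<forall>C\<in>F.
     (\<forall>x\<in>X. (indicator A x :: real) \<ge> indicator B x + indicator C x) \<longrightarrow> mm A \<ge> mm B + mm C)"

definition co_subadditive :: "'a set \<Rightarrow> 'a set set \<Rightarrow> ('a set \<Rightarrow> real) \<Rightarrow> ('a set \<Rightarrow> real) \<Rightarrow> bool" where
  "co_subadditive X F mm mp \<longleftrightarrow> (\<forall>A\<in>F. \<forall>B\<in>F. \<forall>C\<in>F.
     (\<forall>x\<in>X. (indicator A x :: real) \<le> indicator B x + indicator C x) \<longrightarrow> mm A \<le> mm B + mp C)"

definition co_superadditive :: "'a set \<Rightarrow> 'a set set \<Rightarrow> ('a set \<Rightarrow> real) \<Rightarrow> ('a set \<Rightarrow> real) \<Rightarrow> bool" where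
  "co_superadditive X F mp mm \<longleftrightarrow> (\<forall>A\<in>F. \<forall>B\<in>F. \<forall>C\<in>F.
     (\<forall>x\<in>X. (indicator A x :: real) \<ge> indicator B x + indicator C x) \<longrightarrow> mp A \<ge> mp B + mm C)"

definition set_function :: "'a set \<Rightarrow> 'a set set \<Rightarrow> ('a set \<Rightarrow> real) \<Rightarrow> bool" where
  "set_function X F m \<longleftrightarrow> (\<forall>A\<in>F. 0 \<le> m A \<and> m A \<le> 1) \<and> m {} = 0 \<and> m X = 1"

definition conjugate_pair :: "'a set \<Rightarrow> 'a set set \<Rightarrow> ('a set \<Rightarrow> real) \<Rightarrow> ('a set \<Rightarrow> real) \<Rightarrow> bool" where
  "conjugate_pair X F mp mm \<longleftrightarrow> set_function X F mp \<and> set_function X F mm \<and>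
     subadditive X F mp \<and> superadditive X F mm \<and>
     co_subadditive X F mm mp \<and> co_superadditive X F mp mm"

definition dmu :: "('a set \<Rightarrow> real) \<Rightarrow> 'a set \<Rightarrow> 'a set \<Rightarrow> real" where
  "dmu m A B = m ((A - B) \<union> (B - A))"

definition pm_complete :: "'b set \<Rightarrow> ('b \<Rightarrow> 'b \<Rightarrow> real) \<Rightarrow> bool" where
  "pm_complete E d \<longleftrightarrow> (\<forall>s :: nat \<Rightarrow> 'b. (\<forall>n. s n \<in> E) \<and>
       (\<forall>e>0. \<exists>N. \<forall>m\<ge>N. \<forall>n\<ge>N. d (s m) (s n) < e)
     \<longrightarrow> (\<exists>a\<in>E. \<forall>e>0. \<exists>N. \<forall>n\<ge>N. d (s n) a < e))"

text \<open>Convergence of a net indexed by {(i,j). i \<le> j}, directed by the product order,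
  towards a point a, with respect to a (pseudo)distance d.\<close>
definition net_conv :: "('b \<Rightarrow> 'b \<Rightarrow> real) \<Rightarrow> (nat \<Rightarrow> nat \<Rightarrow> 'b) \<Rightarrow> 'b \<Rightarrow> bool" where
  "net_conv d g a \<longleftrightarrow> (\<forall>e>0. \<exists>i0 j0. i0 \<le> j0 \<and>
       (\<forall>i j. i \<le> j \<and> i0 \<le> i \<and> j0 \<le> j \<longrightarrow> d (g i j) a < e))"

definition real_dist :: "real \<Rightarrow> real \<Rightarrow> real" where
  "real_dist x y = \<bar>x - y\<bar>"

end

theory Submission
  imports Defs Complex_Main
begin

text \<open>
  Write U i j for the union of A i, ..., A j. If the nets of mu+ and mu- of these unions tend to L,
  co-superadditivity gives d(A i, U i j) \<le> mu+(U i j) - mu-(A i) with both terms close to L, so the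
  sequence A is Cauchy and the unions converge along with it; mu+ is 1-Lipschitz for d, so its
  value at the limit is L.

  Conversely, a Cauchy sequence has a subsequence with d(A k, A (k+1)) \<le> 2^-k. A point of
  U i j outside A i enters the sequence at some step, so U i j - A i is covered by consecutive
  symmetric differences and d(U i j, A i) \<le> 2^(1-i). Since mu+ and mu- are both 1-Lipschitz
  for d and agree on E, both nets of unions tend to lim mu+(A k), and the limit of the unions
  is a limit of the whole Cauchy sequence.
\<close>

lemma field_of_sets_subset: "field_of_sets X F \<Longrightarrow> A \<in> F \<Longrightarrow> A \<subseteq> X"
  unfolding field_of_sets_def by blast

lemma field_of_sets_empty: "field_of_sets X F \<Longrightarrow> {} \<in> F"
  unfolding field_of_sets_def by blast

lemma field_of_sets_Un: "field_of_sets X F \<Longrightarrow> A \<in> F \<Longrightarrow> B \<in> F \<Longrightarrow> A \<union> B \<in> F"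
  unfolding field_of_sets_def by blast

lemma field_of_sets_Diff:
  assumes "field_of_sets X F" "A \<in> F" "B \<in> F"
  shows "A - B \<in> F"
proof -
  have "A - B = X - ((X - A) \<union> B)"
    using field_of_sets_subset[OF assms(1,2)] by blast
  then show ?thesis
    using assms unfolding field_of_sets_def by metis
qed

lemma field_of_sets_UN:
  assumes "field_of_sets X F" "finite S" "\<And>k. k \<in> S \<Longrightarrow> A k \<in> F"
  shows "(\<Union>k\<in>S. A k) \<in> F"
  using assms(2,3)
  by (induction S rule: finite_induct) (auto intro: field_of_sets_empty[OF assms(1)] field_of_sets_Un[OF assms(1)])

definition pm_Cauchy :: "('b \<Rightarrow> 'b \<Rightarrow> real) \<Rightarrow> (nat \<Rightarrow> 'b) \<Rightarrow> bool" where
  "pm_Cauchy d s \<longleftrightarrow> (\<forall>e>0. \<exists>N. \<forall>m\<ge>N. \<forall>n\<ge>N. d (s m) (s n) < e)"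

definition pm_tendsto :: "('b \<Rightarrow> 'b \<Rightarrow> real) \<Rightarrow> (nat \<Rightarrow> 'b) \<Rightarrow> 'b \<Rightarrow> bool" where
  "pm_tendsto d s a \<longleftrightarrow> (\<forall>e>0. \<exists>N. \<forall>n\<ge>N. d (s n) a < e)"

lemma pm_complete_iff:
  "pm_complete E d \<longleftrightarrow> (\<forall>s. (\<forall>n. s n \<in> E) \<and> pm_Cauchy d s \<longrightarrow> (\<exists>a\<in>E. pm_tendsto d s a))"
  unfolding pm_complete_def pm_Cauchy_def pm_tendsto_def ..

lemma pm_tendsto_real_dist_iff: "pm_tendsto real_dist f L \<longleftrightarrow> f \<longlonglongrightarrow> L"
  unfolding pm_tendsto_def real_dist_def LIMSEQ_iff by simp

lemma net_conv_iff:
  "net_conv d g a \<longleftrightarrow> (\<forall>e>0. \<exists>N. \<forall>i\<ge>N. \<forall>j\<ge>i. d (g i j) a < e)"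
  unfolding net_conv_def
proof (intro iffI allI impI)
  fix e :: real
  assume "\<forall>e>0. \<exists>i0 j0. i0 \<le> j0 \<and> (\<forall>i j. i \<le> j \<and> i0 \<le> i \<and> j0 \<le> j \<longrightarrow> d (g i j) a < e)"
    and "e > 0"
  then obtain i0 j0 where "i0 \<le> j0" "\<forall>i j. i \<le> j \<and> i0 \<le> i \<and> j0 \<le> j \<longrightarrow> d (g i j) a < e"
    by blast
  then show "\<exists>N. \<forall>i\<ge>N. \<forall>j\<ge>i. d (g i j) a < e"
    by (intro exI[of _ j0]) auto
next
  fix e :: real
  assume "\<forall>e>0. \<exists>N. \<forall>i\<ge>N. \<forall>j\<ge>i. d (g i j) a < e" and "e > 0"
  then obtain N where "\<forall>i\<ge>N. \<forall>j\<ge>i. d (g i j) a < e"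
    by blast
  then show "\<exists>i0 j0. i0 \<le> j0 \<and> (\<forall>i j. i \<le> j \<and> i0 \<le> i \<and> j0 \<le> j \<longrightarrow> d (g i j) a < e)"
    by (intro exI[of _ N]) auto
qed

lemma net_conv_diagonal: "net_conv d g a \<Longrightarrow> pm_tendsto d (\<lambda>n. g n n) a"
  unfolding net_conv_iff pm_tendsto_def by blast

lemma pm_Cauchy_fast_subseq:
  fixes s :: "nat \<Rightarrow> 'b" and d :: "'b \<Rightarrow> 'b \<Rightarrow> real"
  assumes "pm_Cauchy d s"
  obtains r where "strict_mono r" "\<And>k m. r k \<le> m \<Longrightarrow> d (s m) (s (r k)) < (1/2)^k"
proof -
  have "\<forall>k. \<exists>N. \<forall>m\<ge>N. \<forall>n\<ge>N. d (s m) (s n) < (1/2)^k"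
    using assms unfolding pm_Cauchy_def by simp
  then obtain N :: "nat \<Rightarrow> nat" where N: "\<And>k m n. N k \<le> m \<Longrightarrow> N k \<le> n \<Longrightarrow> d (s m) (s n) < (1/2)^k"
    by metis
  define r where "r k = k + Max (N ` {..k})" for k
  have "strict_mono r"
    unfolding strict_mono_def r_def
    by (auto intro!: add_less_le_mono Max_mono)
  moreover have "d (s m) (s (r k)) < (1/2)^k" if "r k \<le> m" for k m
  proof -
    have "N k \<le> Max (N ` {..k})"
      by (rule Max_ge) auto
    then have "N k \<le> r k"
      unfolding r_def by linarith
    then show ?thesis
      using N that by simp
  qed
  ultimately show ?thesis
    using that by blast
qed

lemma ex_step_into:
  assumes "i \<le> k" "x \<in> A k" "x \<notin> A i"
  shows "\<exists>l\<in>{i..<k}. x \<notin> A l \<and> x \<in> A (Suc l)"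
  using assms
proof (induction k rule: dec_induct)
  case (step k)
  show ?case
  proof (cases "x \<in> A k")
    case True
    with step show ?thesis
      by (meson atLeastLessThan_iff less_SucI)
  next
    case False
    with step show ?thesis
      by auto
  qed
qed simp

lemma sum_geometric_half_le: "(\<Sum>l\<in>{i..<j}. (1/2::real)^l) \<le> 2 * (1/2)^i"
proof (cases "i \<le> j")
  case True
  then obtain m where "j = i + m"
    using le_Suc_ex by blast
  moreover have "(\<Sum>l\<in>{i..<i+m}. (1/2::real)^l) = 2 * (1/2)^i - 2 * (1/2)^(i+m)"
    by (induction m) (auto simp: power_add)
  ultimately show ?thesis
    by simp
qed simp

lemma indicator_le_add_if_subset_Un:
  "A \<subseteq> B \<union> C \<Longrightarrow> (indicator A x :: real) \<le> indicator B x + indicator C x"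
  by (auto simp: indicator_def)

lemma indicator_add_le_if_disjoint_subset:
  "B \<union> C \<subseteq> A \<Longrightarrow> B \<inter> C = {} \<Longrightarrow> indicator B x + indicator C x \<le> (indicator A x :: real)"
  by (auto simp: indicator_def)

locale conjugate_pair_on_field =
  fixes X :: "'a set" and F :: "'a set set" and mp mm :: "'a set \<Rightarrow> real"
  assumes field: "field_of_sets X F"
    and conjugate: "conjugate_pair X F mp mm"
begin

lemma mp_empty: "mp {} = 0"
  using conjugate unfolding conjugate_pair_def set_function_def by blast

lemma mp_subadditive:
  assumes "A \<in> F" "B \<in> F" "C \<in> F" "A \<subseteq> B \<union> C"
  shows "mp A \<le> mp B + mp C"
  using conjugate assms(1-3) indicator_le_add_if_subset_Un[OF assms(4)]
  unfolding conjugate_pair_def subadditive_def by simp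

lemma mm_co_subadditive:
  assumes "A \<in> F" "B \<in> F" "C \<in> F" "A \<subseteq> B \<union> C"
  shows "mm A \<le> mm B + mp C"
  using conjugate assms(1-3) indicator_le_add_if_subset_Un[OF assms(4)]
  unfolding conjugate_pair_def co_subadditive_def by simp

lemma mp_co_superadditive:
  assumes "A \<in> F" "B \<in> F" "C \<in> F" "B \<union> C \<subseteq> A" "B \<inter> C = {}"
  shows "mp B + mm C \<le> mp A"
  using conjugate assms(1-3) indicator_add_le_if_disjoint_subset[OF assms(4,5)]
  unfolding conjugate_pair_def co_superadditive_def by simp

lemma mp_mono: "A \<in> F \<Longrightarrow> B \<in> F \<Longrightarrow> A \<subseteq> B \<Longrightarrow> mp A \<le> mp B"
  using mp_subadditive[of A B "{}"] field_of_sets_empty[OF field] mp_empty by auto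

lemma mp_UN_le_sum:
  assumes "finite S" "\<And>k. k \<in> S \<Longrightarrow> A k \<in> F"
  shows "mp (\<Union>k\<in>S. A k) \<le> (\<Sum>k\<in>S. mp (A k))"
  using assms
proof (induction S rule: finite_induct)
  case empty
  then show ?case
    by (simp add: mp_empty)
next
  case (insert x S)
  have "(\<Union>k\<in>S. A k) \<in> F"
    using field_of_sets_UN[OF field insert(1)] insert(4) by blast
  then have "mp (\<Union>k\<in>insert x S. A k) \<le> mp (A x) + mp (\<Union>k\<in>S. A k)"
    by (intro mp_subadditive) (use insert field_of_sets_Un[OF field] in auto)
  with insert show ?case
    by simp
qed

lemma sym_diff_in_field: "A \<in> F \<Longrightarrow> B \<in> F \<Longrightarrow> (A - B) \<union> (B - A) \<in> F"
  by (simp add: field_of_sets_Diff[OF field] field_of_sets_Un[OF field])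

lemma dmu_commute: "dmu mp A B = dmu mp B A"
  unfolding dmu_def by (simp add: Un_commute)

lemma dmu_triangle:
  "A \<in> F \<Longrightarrow> B \<in> F \<Longrightarrow> C \<in> F \<Longrightarrow> dmu mp A C \<le> dmu mp A B + dmu mp B C"
  unfolding dmu_def by (rule mp_subadditive) (auto simp: sym_diff_in_field)

lemma abs_mp_diff_le_dmu:
  assumes "A \<in> F" "B \<in> F"
  shows "\<bar>mp A - mp B\<bar> \<le> dmu mp A B"
proof -
  have "mp A \<le> mp B + dmu mp A B" "mp B \<le> mp A + dmu mp A B"
    unfolding dmu_def by (rule mp_subadditive; use assms sym_diff_in_field in blast)+
  then show ?thesis
    by linarith
qed

lemma abs_mm_diff_le_dmu:
  assumes "A \<in> F" "B \<in> F"
  shows "\<bar>mm A - mm B\<bar> \<le> dmu mp A B"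
proof -
  have "mm A \<le> mm B + dmu mp A B" "mm B \<le> mm A + dmu mp A B"
    unfolding dmu_def by (rule mm_co_subadditive; use assms sym_diff_in_field in blast)+
  then show ?thesis
    by linarith
qed

lemma dmu_subset_le:
  assumes "A \<in> F" "B \<in> F" "A \<subseteq> B"
  shows "dmu mp A B \<le> mp B - mm A"
proof -
  have "mp (B - A) + mm A \<le> mp B"
    by (rule mp_co_superadditive) (use assms field_of_sets_Diff[OF field] in auto)
  moreover have "(A - B) \<union> (B - A) = B - A"
    using assms(3) by blast
  ultimately show ?thesis
    unfolding dmu_def by simp
qed

lemma dmu_interval_union_le_sum:
  assumes A: "\<And>k. A k \<in> F" and "i \<le> j"
  shows "dmu mp (\<Union>k\<in>{i..j}. A k) (A i) \<le> (\<Sum>l\<in>{i..<j}. dmu mp (A l) (A (Suc l)))"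
proof -
  define D where "D l = (A l - A (Suc l)) \<union> (A (Suc l) - A l)" for l
  have D: "D l \<in> F" for l
    unfolding D_def using A sym_diff_in_field by blast
  have "(\<Union>k\<in>{i..j}. A k) - A i \<subseteq> (\<Union>l\<in>{i..<j}. D l)"
  proof
    fix x
    assume "x \<in> (\<Union>k\<in>{i..j}. A k) - A i"
    then obtain k where "i \<le> k" "k \<le> j" "x \<in> A k" "x \<notin> A i"
      by auto
    then obtain l where "l \<in> {i..<j}" "x \<notin> A l" "x \<in> A (Suc l)"
      using ex_step_into[of i k x A] by (meson atLeastLessThan_iff order_less_le_trans)
    then show "x \<in> (\<Union>l\<in>{i..<j}. D l)"
      unfolding D_def by blast
  qed
  then have "mp ((\<Union>k\<in>{i..j}. A k) - A i) \<le> mp (\<Union>l\<in>{i..<j}. D l)"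
    by (intro mp_mono field_of_sets_Diff[OF field] field_of_sets_UN[OF field]) (auto simp: A D)
  also have "\<dots> \<le> (\<Sum>l\<in>{i..<j}. mp (D l))"
    by (rule mp_UN_le_sum) (use D in auto)
  also have "(\<Union>k\<in>{i..j}. A k) - A i = ((\<Union>k\<in>{i..j}. A k) - A i) \<union> (A i - (\<Union>k\<in>{i..j}. A k))"
    using \<open>i \<le> j\<close> by auto
  finally show ?thesis
    unfolding D_def dmu_def .
qed

lemma pm_tendsto_mp:
  assumes "\<And>n. A n \<in> F" "B \<in> F" "pm_tendsto (dmu mp) A B"
  shows "(\<lambda>n. mp (A n)) \<longlonglongrightarrow> mp B"
  using assms abs_mp_diff_le_dmu
  unfolding pm_tendsto_real_dist_iff[symmetric] pm_tendsto_def real_dist_def by (meson le_less_trans)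

lemma Cauchy_mp_if_pm_Cauchy:
  assumes "\<And>n. A n \<in> F" "pm_Cauchy (dmu mp) A"
  shows "Cauchy (\<lambda>n. mp (A n))"
proof (rule metric_CauchyI)
  fix e :: real
  assume "e > 0"
  then obtain N where N: "\<forall>m\<ge>N. \<forall>n\<ge>N. dmu mp (A m) (A n) < e"
    using assms(2) unfolding pm_Cauchy_def by blast
  show "\<exists>N. \<forall>m\<ge>N. \<forall>n\<ge>N. dist (mp (A m)) (mp (A n)) < e"
  proof (intro exI allI impI)
    fix m n
    assume "N \<le> m" "N \<le> n"
    then show "dist (mp (A m)) (mp (A n)) < e"
      using N abs_mp_diff_le_dmu[OF assms(1) assms(1), of m n] unfolding dist_real_def by fastforce
  qed
qed

lemma interval_union_close_to_ends:
  assumes A: "\<And>k. A k \<in> F"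
    and mp_conv: "net_conv real_dist (\<lambda>i j. mp (\<Union>k\<in>{i..j}. A k)) L"
    and mm_conv: "net_conv real_dist (\<lambda>i j. mm (\<Union>k\<in>{i..j}. A k)) L"
    and "e > 0"
  shows "\<exists>N. \<forall>i\<ge>N. \<forall>j\<ge>i.
    dmu mp (A i) (\<Union>k\<in>{i..j}. A k) < e \<and> dmu mp (A j) (\<Union>k\<in>{i..j}. A k) < e"
proof -
  define U where "U i j = (\<Union>k\<in>{i..j}. A k)" for i j
  obtain N1 where N1: "\<And>i j. N1 \<le> i \<Longrightarrow> i \<le> j \<Longrightarrow> \<bar>mp (U i j) - L\<bar> < e/2"
    using mp_conv \<open>e > 0\<close> unfolding net_conv_iff real_dist_def U_def by (meson half_gt_zero)
  obtain N2 where N2: "\<And>i j. N2 \<le> i \<Longrightarrow> i \<le> j \<Longrightarrow> \<bar>mm (U i j) - L\<bar> < e/2"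
    using mm_conv \<open>e > 0\<close> unfolding net_conv_iff real_dist_def U_def by (meson half_gt_zero)
  have "dmu mp (A i) (U i j) < e \<and> dmu mp (A j) (U i j) < e" if "max N1 N2 \<le> i" "i \<le> j" for i j
  proof -
    have UF: "U i j \<in> F"
      unfolding U_def using field_of_sets_UN[OF field] A by auto
    have ends: "dmu mp (A k) (U i j) \<le> mp (U i j) - mm (U k k)" if "k \<in> {i..j}" for k
    proof -
      have "A k \<subseteq> U i j" "U k k = A k"
        using that unfolding U_def by auto
      then show ?thesis
        using dmu_subset_le[OF A UF] by simp
    qed
    have "dmu mp (A i) (U i j) \<le> mp (U i j) - mm (U i i)" "dmu mp (A j) (U i j) \<le> mp (U i j) - mm (U j j)"
      using ends \<open>i \<le> j\<close> by auto
    moreover have "\<bar>mp (U i j) - L\<bar> < e/2" "\<bar>mm (U i i) - L\<bar> < e/2" "\<bar>mm (U j j) - L\<bar> < e/2"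
      using N1 N2 that by auto
    ultimately show ?thesis
      by linarith
  qed
  then show ?thesis
    unfolding U_def by blast
qed

lemma pm_Cauchy_if_close_to_interval_unions:
  assumes AF: "\<And>k. A k \<in> F"
    and close: "\<And>e. e > 0 \<Longrightarrow> \<exists>N. \<forall>i\<ge>N. \<forall>j\<ge>i.
      dmu mp (A i) (\<Union>k\<in>{i..j}. A k) < e \<and> dmu mp (A j) (\<Union>k\<in>{i..j}. A k) < e"
  shows "pm_Cauchy (dmu mp) A"
  unfolding pm_Cauchy_def
proof (intro allI impI)
  fix e :: real
  assume "e > 0"
  define U where "U i j = (\<Union>k\<in>{i..j}. A k)" for i j
  have UF: "U i j \<in> F" for i j
    unfolding U_def using field_of_sets_UN[OF field] AF by auto
  obtain N where N: "\<forall>i\<ge>N. \<forall>j\<ge>i. dmu mp (A i) (U i j) < e/2 \<and> dmu mp (A j) (U i j) < e/2"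
    using close[of "e/2"] \<open>e > 0\<close> unfolding U_def by auto
  have ordered: "dmu mp (A m) (A n) < e" if "N \<le> m" "m \<le> n" for m n
  proof -
    have "dmu mp (A m) (A n) \<le> dmu mp (A m) (U m n) + dmu mp (A n) (U m n)"
      using dmu_triangle[of "A m" "U m n" "A n", OF AF UF AF] dmu_commute[of "U m n" "A n"] by simp
    moreover have "dmu mp (A m) (U m n) < e/2" "dmu mp (A n) (U m n) < e/2"
      using N that by auto
    ultimately show ?thesis
      by linarith
  qed
  have "dmu mp (A m) (A n) < e" if "N \<le> m" "N \<le> n" for m n
    using ordered[of m n] ordered[of n m] dmu_commute[of "A m" "A n"] that by (cases "m \<le> n") auto
  then show "\<exists>N. \<forall>m\<ge>N. \<forall>n\<ge>N. dmu mp (A m) (A n) < e"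
    by blast
qed

lemma interval_union_net_conv_if_pm_tendsto:
  assumes AF: "\<And>k. A k \<in> F" and BF: "B \<in> F"
    and close: "\<And>e. e > 0 \<Longrightarrow> \<exists>N. \<forall>i\<ge>N. \<forall>j\<ge>i. dmu mp (A j) (\<Union>k\<in>{i..j}. A k) < e"
    and "pm_tendsto (dmu mp) A B"
  shows "net_conv (dmu mp) (\<lambda>i j. \<Union>k\<in>{i..j}. A k) B"
  unfolding net_conv_iff
proof (intro allI impI)
  fix e :: real
  assume "e > 0"
  define U where "U i j = (\<Union>k\<in>{i..j}. A k)" for i j
  have UF: "U i j \<in> F" for i j
    unfolding U_def using field_of_sets_UN[OF field] AF by auto
  obtain N1 where N1: "\<forall>i\<ge>N1. \<forall>j\<ge>i. dmu mp (A j) (U i j) < e/2"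
    using close[of "e/2"] \<open>e > 0\<close> unfolding U_def by auto
  obtain N2 where N2: "\<forall>n\<ge>N2. dmu mp (A n) B < e/2"
    using \<open>pm_tendsto (dmu mp) A B\<close> \<open>e > 0\<close> unfolding pm_tendsto_def by (meson half_gt_zero)
  have "dmu mp (U i j) B < e" if "max N1 N2 \<le> i" "i \<le> j" for i j
  proof -
    have "dmu mp (U i j) B \<le> dmu mp (A j) (U i j) + dmu mp (A j) B"
      using dmu_triangle[of "U i j" "A j" B, OF UF AF BF] dmu_commute[of "U i j" "A j"] by simp
    moreover have "dmu mp (A j) (U i j) < e/2" "dmu mp (A j) B < e/2"
      using N1 N2 that by auto
    ultimately show ?thesis
      by linarith
  qed
  then show "\<exists>N. \<forall>i\<ge>N. \<forall>j\<ge>i. dmu mp (\<Union>k\<in>{i..j}. A k) B < e"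
    unfolding U_def by blast
qed

lemma union_net_conv_if_pm_complete:
  assumes "E \<subseteq> F" "pm_complete E (dmu mp)" and A: "\<And>k. A k \<in> E"
    and mp_conv: "net_conv real_dist (\<lambda>i j. mp (\<Union>k\<in>{i..j}. A k)) L"
    and mm_conv: "net_conv real_dist (\<lambda>i j. mm (\<Union>k\<in>{i..j}. A k)) L"
  shows "\<exists>B\<in>E. net_conv (dmu mp) (\<lambda>i j. \<Union>k\<in>{i..j}. A k) B \<and> mp B = L"
proof -
  have AF: "A k \<in> F" for k
    using A \<open>E \<subseteq> F\<close> by blast
  note close = interval_union_close_to_ends[OF AF mp_conv mm_conv]
  have "pm_Cauchy (dmu mp) A"
    by (rule pm_Cauchy_if_close_to_interval_unions[OF AF close])
  then obtain B where "B \<in> E" and A_to_B: "pm_tendsto (dmu mp) A B"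
    using \<open>pm_complete E (dmu mp)\<close> A unfolding pm_complete_iff by blast
  then have BF: "B \<in> F"
    using \<open>E \<subseteq> F\<close> by blast
  have "net_conv (dmu mp) (\<lambda>i j. \<Union>k\<in>{i..j}. A k) B"
    using interval_union_net_conv_if_pm_tendsto[OF AF BF _ A_to_B] close by blast
  moreover have "(\<lambda>n. mp (A n)) \<longlonglongrightarrow> L"
    using net_conv_diagonal[OF mp_conv] unfolding pm_tendsto_real_dist_iff by simp
  then have "mp B = L"
    using pm_tendsto_mp[OF AF BF A_to_B] LIMSEQ_unique by blast
  ultimately show ?thesis
    using \<open>B \<in> E\<close> by blast
qed

lemma dmu_interval_union_le_geometric:
  assumes AF: "\<And>k. A k \<in> F" and consecutive: "\<And>k. dmu mp (A k) (A (Suc k)) \<le> (1/2)^k"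
    and "i \<le> j"
  shows "dmu mp (\<Union>k\<in>{i..j}. A k) (A i) \<le> 2 * (1/2)^i"
proof -
  have "dmu mp (\<Union>k\<in>{i..j}. A k) (A i) \<le> (\<Sum>l\<in>{i..<j}. dmu mp (A l) (A (Suc l)))"
    by (rule dmu_interval_union_le_sum[OF AF \<open>i \<le> j\<close>])
  also have "\<dots> \<le> (\<Sum>l\<in>{i..<j}. (1/2)^l)"
    by (rule sum_mono) (rule consecutive)
  also have "\<dots> \<le> 2 * (1/2)^i"
    by (rule sum_geometric_half_le)
  finally show ?thesis .
qed

lemma interval_union_nets_tendsto:
  assumes AF: "\<And>k. A k \<in> F" and consecutive: "\<And>k. dmu mp (A k) (A (Suc k)) \<le> (1/2)^k"
    and mm_eq_mp: "\<And>k. mm (A k) = mp (A k)" and A_to_L: "(\<lambda>k. mp (A k)) \<longlonglongrightarrow> L"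
  shows "net_conv real_dist (\<lambda>i j. mp (\<Union>k\<in>{i..j}. A k)) L"
    and "net_conv real_dist (\<lambda>i j. mm (\<Union>k\<in>{i..j}. A k)) L"
proof -
  define U where "U i j = (\<Union>k\<in>{i..j}. A k)" for i j
  have UF: "U i j \<in> F" for i j
    unfolding U_def using field_of_sets_UN[OF field] AF by auto
  have geometric_to_0: "(\<lambda>i. 2 * (1/2::real)^i) \<longlonglongrightarrow> 0"
    by (intro tendsto_mult_right_zero LIMSEQ_power_zero) simp
  have "\<exists>N. \<forall>i\<ge>N. \<forall>j\<ge>i. \<bar>mp (U i j) - L\<bar> < e \<and> \<bar>mm (U i j) - L\<bar> < e" if "e > 0" for e
  proof -
    have "\<forall>\<^sub>F i in sequentially. 2 * (1/2)^i < e/2"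
      by (rule order_tendstoD(2)[OF geometric_to_0]) (use \<open>e > 0\<close> in simp)
    moreover have "\<forall>\<^sub>F i in sequentially. \<bar>mp (A i) - L\<bar> < e/2"
      using tendstoD[OF A_to_L, of "e/2"] \<open>e > 0\<close> unfolding dist_real_def by simp
    ultimately have "\<forall>\<^sub>F i in sequentially. 2 * (1/2)^i < e/2 \<and> \<bar>mp (A i) - L\<bar> < e/2"
      by (rule eventually_conj)
    then obtain N where N: "\<forall>i\<ge>N. 2 * (1/2)^i < e/2 \<and> \<bar>mp (A i) - L\<bar> < e/2"
      unfolding eventually_sequentially by blast
    have "\<bar>mp (U i j) - L\<bar> < e \<and> \<bar>mm (U i j) - L\<bar> < e" if "N \<le> i" "i \<le> j" for i j
    proof -
      have "\<bar>mp (U i j) - mp (A i)\<bar> \<le> dmu mp (U i j) (A i)" "\<bar>mm (U i j) - mm (A i)\<bar> \<le> dmu mp (U i j) (A i)"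
        using abs_mp_diff_le_dmu abs_mm_diff_le_dmu UF AF by auto
      moreover have "dmu mp (U i j) (A i) \<le> 2 * (1/2)^i"
        unfolding U_def by (rule dmu_interval_union_le_geometric[OF AF consecutive \<open>i \<le> j\<close>])
      ultimately show ?thesis
        using N[rule_format, OF \<open>N \<le> i\<close>] mm_eq_mp[of i] by linarith
    qed
    then show ?thesis
      by blast
  qed
  then show "net_conv real_dist (\<lambda>i j. mp (\<Union>k\<in>{i..j}. A k)) L"
    and "net_conv real_dist (\<lambda>i j. mm (\<Union>k\<in>{i..j}. A k)) L"
    unfolding net_conv_iff real_dist_def U_def by meson+
qed

lemma pm_tendsto_if_fast_subseq_tendsto:
  assumes sF: "\<And>n. s n \<in> F" and BF: "B \<in> F"
    and fast: "\<And>k m. r k \<le> m \<Longrightarrow> dmu mp (s m) (s (r k)) < (1/2)^k"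
    and A_to_B: "pm_tendsto (dmu mp) (\<lambda>k. s (r k)) B"
  shows "pm_tendsto (dmu mp) s B"
  unfolding pm_tendsto_def
proof (intro allI impI)
  fix e :: real
  assume "e > 0"
  obtain N1 where N1: "\<forall>n\<ge>N1. (1/2::real)^n < e/2"
    using order_tendstoD(2)[OF LIMSEQ_power_zero[of "1/2::real"], of "e/2"] \<open>e > 0\<close>
    unfolding eventually_sequentially by auto
  obtain N2 where N2: "\<forall>n\<ge>N2. dmu mp (s (r n)) B < e/2"
    using A_to_B \<open>e > 0\<close> unfolding pm_tendsto_def by (meson half_gt_zero)
  define i where "i = max N1 N2"
  have "(1/2)^i < e/2" "dmu mp (s (r i)) B < e/2"
    using N1 N2 unfolding i_def by auto
  then have "dmu mp (s n) B < e" if "r i \<le> n" for n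
    using fast[OF that] dmu_triangle[OF sF sF BF, of n "r i"] by linarith
  then show "\<exists>N. \<forall>n\<ge>N. dmu mp (s n) B < e"
    by blast
qed

lemma pm_complete_if_union_net_conv:
  assumes "E \<subseteq> F" and mp_eq_mm: "\<And>A. A \<in> E \<Longrightarrow> mp A = mm A"
    and union_conv: "\<And>A L. (\<And>k. A k \<in> E) \<Longrightarrow>
      net_conv real_dist (\<lambda>i j. mp (\<Union>k\<in>{i..j}. A k)) L \<Longrightarrow>
      net_conv real_dist (\<lambda>i j. mm (\<Union>k\<in>{i..j}. A k)) L \<Longrightarrow>
      \<exists>B\<in>E. net_conv (dmu mp) (\<lambda>i j. \<Union>k\<in>{i..j}. A k) B"
  shows "pm_complete E (dmu mp)"
  unfolding pm_complete_iff
proof (intro allI impI)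
  fix s :: "nat \<Rightarrow> 'a set"
  assume "(\<forall>n. s n \<in> E) \<and> pm_Cauchy (dmu mp) s"
  then have sE: "\<And>n. s n \<in> E" and "pm_Cauchy (dmu mp) s"
    by auto
  have sF: "s n \<in> F" for n
    using sE \<open>E \<subseteq> F\<close> by blast
  obtain r where "strict_mono r" and fast: "\<And>k m. r k \<le> m \<Longrightarrow> dmu mp (s m) (s (r k)) < (1/2)^k"
    using pm_Cauchy_fast_subseq[OF \<open>pm_Cauchy (dmu mp) s\<close>] by blast
  define A where "A k = s (r k)" for k
  have AE: "A k \<in> E" and AF: "A k \<in> F" for k
    unfolding A_def using sE sF by auto
  have consecutive: "dmu mp (A k) (A (Suc k)) \<le> (1/2)^k" for k
    using fast[of k "r (Suc k)"] strict_mono_leD[OF \<open>strict_mono r\<close>, of k "Suc k"]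
      dmu_commute[of "A k" "A (Suc k)"]
    unfolding A_def by simp
  obtain L where "(\<lambda>n. mp (s n)) \<longlonglongrightarrow> L"
    using Cauchy_mp_if_pm_Cauchy[OF sF \<open>pm_Cauchy (dmu mp) s\<close>] Cauchy_convergent_iff convergent_def
    by blast
  then have "(\<lambda>k. mp (A k)) \<longlonglongrightarrow> L"
    using LIMSEQ_subseq_LIMSEQ[OF _ \<open>strict_mono r\<close>] unfolding A_def comp_def by blast
  then obtain B where "B \<in> E" and "net_conv (dmu mp) (\<lambda>i j. \<Union>k\<in>{i..j}. A k) B"
    using union_conv[of A L, OF AE] interval_union_nets_tendsto[OF AF consecutive] mp_eq_mm[OF AE]
    by metis
  then have "pm_tendsto (dmu mp) (\<lambda>k. s (r k)) B"
    using net_conv_diagonal unfolding A_def by fastforce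
  moreover have "B \<in> F"
    using \<open>B \<in> E\<close> \<open>E \<subseteq> F\<close> by blast
  ultimately show "\<exists>a\<in>E. pm_tendsto (dmu mp) s a"
    using pm_tendsto_if_fast_subseq_tendsto[of s B r, OF sF _ fast] \<open>B \<in> E\<close> by blast
qed

end

theorem theorem3p3:
  fixes X :: "'a set" and F E :: "'a set set" and mp mm :: "'a set \<Rightarrow> real"
  assumes "field_of_sets X F"
    and "E \<subseteq> F"
    and "conjugate_pair X F mp mm"
    and "\<forall>A\<in>E. mp A = mm A"
  shows "pm_complete E (dmu mp) \<longleftrightarrow>
    (\<forall>(A :: nat \<Rightarrow> 'a set) (L :: real).
       (\<forall>k. A k \<in> E) \<and>
       net_conv real_dist (\<lambda>i j. mp (\<Union>k\<in>{i..j}. A k)) L \<and>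
       net_conv real_dist (\<lambda>i j. mm (\<Union>k\<in>{i..j}. A k)) L
       \<longrightarrow> (\<exists>B\<in>E. net_conv (dmu mp) (\<lambda>i j. \<Union>k\<in>{i..j}. A k) B \<and> mp B = L))"
    (is "_ \<longleftrightarrow> ?union_conv")
proof
  interpret conjugate_pair_on_field X F mp mm
    using assms(1,3) by unfold_locales
  show "pm_complete E (dmu mp) \<Longrightarrow> ?union_conv"
    using union_net_conv_if_pm_complete[OF assms(2)] by blast
  show "?union_conv \<Longrightarrow> pm_complete E (dmu mp)"
    using pm_complete_if_union_net_conv[OF assms(2)] assms(4) by blast
qed

end
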